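(* Let $N\ge1$ and let $T_N$ be the $N\times N$ Pascal matrix $(T_N)_{jk}=\binom{j+k}{j}$, $0\le j,k<N$. Let $J_N$ be the $N\times N$ symmetric tridiagonal matrix with $$(J_N)_{kk}=k\,(2k^2+3k+2-N^2),\qquad (J_N)_{k,k+1}=(J_N)_{k+1,k}=(k+1)\big(N^2-(k+1)^2\big),$$ and all other entries zero; equivalently $(J_N)_{jk}=(N^2J-\widetilde J)_{jk}$ for $0\le j,k<N$, where $J,\widetilde J$ are the semi-infinite tridiagonal symmetric matrices with diagonals $-n$, resp. $-2n^3-3n^2-2n$, and off-diagonal entries $J_{n-1,n}=n$, resp. $\widetilde J_{n-1,n}=n^3$. Then $J_NT_N=T_NJ_N$.
   Context: Matrix indices start at $0$. *)

theory Defs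
  imports "Jordan_Normal_Form.Matrix"
begin

definition pascal_mat :: "nat \<Rightarrow> int mat" where
  "pascal_mat N = mat N N (\<lambda>(j, k). int ((j + k) choose j))"

definition J_mat :: "nat \<Rightarrow> int mat" where
  "J_mat N = mat N N (\<lambda>(j, k).
     let n = int N; a = int j; b = int k in
     if j = k then a * (2 * a^2 + 3 * a + 2 - n^2)
     else if k = j + 1 then b * (n^2 - b^2)
     else if j = k + 1 then a * (n^2 - a^2)
     else 0)"

end

theory Submission
  imports Defs
begin

text \<open>\<open>J\<^sub>N\<close> is the truncation of a tridiagonal matrix whose off-diagonal weight
  \<open>a (N\<^sup>2 - a\<^sup>2)\<close> vanishes at \<open>a = 0\<close> and \<open>a = N\<close>, so truncation produces no boundary terms and
  \<open>(J\<^sub>N T\<^sub>N)\<^sub>i\<^sub>k\<close> is a three-term expression in binomial coefficients. The absorption identities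
  \<open>(i+k) i binom(i+k-1, i-1) = i\<^sup>2 binom(i+k, i)\<close> and \<open>(i+1) binom(i+k+1, i+1) = (i+k+1) binom(i+k, i)\<close>
  turn \<open>(i+k) (J\<^sub>N T\<^sub>N)\<^sub>i\<^sub>k\<close> into \<open>binom(i+k, i)\<close> times
  \<open>N\<^sup>2 (i\<^sup>2 + ik + k\<^sup>2 + i + k) - (ik + i + k)\<^sup>2 - (i + k)\<close>, which is symmetric in \<open>i\<close> and \<open>k\<close>.
  Hence \<open>J\<^sub>N T\<^sub>N\<close> is symmetric, and as both factors are symmetric it equals its transpose
  \<open>T\<^sub>N J\<^sub>N\<close>.\<close>

definition tridiag_mat :: "nat \<Rightarrow> (nat \<Rightarrow> 'a::zero) \<Rightarrow> (nat \<Rightarrow> 'a) \<Rightarrow> 'a mat" where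
  "tridiag_mat N d u = mat N N (\<lambda>(j, k).
     if j = k then d j else if k = j + 1 then u k else if j = k + 1 then u j else 0)"

lemma tridiag_mat_sym:
  assumes "j < N" "k < N"
  shows "tridiag_mat N d u $$ (j, k) = tridiag_mat N d u $$ (k, j)"
  using assms by (auto simp: tridiag_mat_def)

lemma tridiag_mat_row_sum:
  fixes d u g :: "nat \<Rightarrow> 'a::semiring_0"
  assumes "u 0 = 0" "u N = 0" "i < N"
  shows "(\<Sum>j<N. tridiag_mat N d u $$ (i, j) * g j)
           = u i * g (i - 1) + d i * g i + u (i + 1) * g (i + 1)"
proof -
  have "(\<Sum>j<N. tridiag_mat N d u $$ (i, j) * g j)
      = (\<Sum>j<N. (if j = i then d i * g i else 0) + (if j = i + 1 then u (i + 1) * g (i + 1) else 0)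
                 + (if j = i - 1 \<and> 0 < i then u i * g (i - 1) else 0))"
    using assms(3) by (intro sum.cong) (auto simp: tridiag_mat_def)
  also have "\<dots> = d i * g i + (if i + 1 < N then u (i + 1) * g (i + 1) else 0)
                 + (if 0 < i then u i * g (i - 1) else 0)"
    using assms(3) less_imp_diff_less[OF assms(3)]
    by (simp add: sum.distrib sum.delta' conj_commute)
  also have "\<dots> = u i * g (i - 1) + d i * g i + u (i + 1) * g (i + 1)"
  proof -
    have "(if i + 1 < N then u (i + 1) * g (i + 1) else 0) = u (i + 1) * g (i + 1)"
      using assms(2,3) by (cases "i + 1 = N") auto
    moreover have "(if 0 < i then u i * g (i - 1) else 0) = u i * g (i - 1)"
      using assms(1) by auto
    ultimately show ?thesis by (simp add: add_ac)
  qed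
  finally show ?thesis .
qed

definition J_diag :: "int \<Rightarrow> nat \<Rightarrow> int" where
  "J_diag n a = int a * (2 * int a ^ 2 + 3 * int a + 2 - n ^ 2)"

definition J_off :: "int \<Rightarrow> nat \<Rightarrow> int" where
  "J_off n a = int a * (n ^ 2 - int a ^ 2)"

lemma J_mat_eq_tridiag_mat: "J_mat N = tridiag_mat N (J_diag (int N)) (J_off (int N))"
  by (auto simp: J_mat_def tridiag_mat_def J_diag_def J_off_def Let_def)

lemma index_mult_square_mat:
  assumes "A \<in> carrier_mat N N" "B \<in> carrier_mat N N" "i < N" "k < N"
  shows "(A * B) $$ (i, k) = (\<Sum>j<N. A $$ (i, j) * B $$ (j, k))"
  using assms by (simp add: scalar_prod_def lessThan_atLeast0)

definition pascal_entry :: "nat \<Rightarrow> nat \<Rightarrow> int" where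
  "pascal_entry j k = int ((j + k) choose j)"

lemma pascal_mat_index: "j < N \<Longrightarrow> k < N \<Longrightarrow> pascal_mat N $$ (j, k) = pascal_entry j k"
  by (simp add: pascal_mat_def pascal_entry_def)

lemma pascal_entry_sym: "pascal_entry j k = pascal_entry k j"
  unfolding pascal_entry_def
  by (metis add.commute add_diff_cancel_left' binomial_symmetric le_add1)

lemma pascal_entry_pred_mult:
  "int (i + k) * (int i * pascal_entry (i - 1) k) = int i ^ 2 * pascal_entry i k"
proof (cases i)
  case (Suc a)
  have "(i + k) * (i * ((i - 1 + k) choose (i - 1))) = i * (Suc (a + k) * ((a + k) choose a))"
    using Suc by (simp add: algebra_simps)
  also have "\<dots> = i ^ 2 * ((i + k) choose i)"
    unfolding Suc_times_binomial_eq using Suc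
    by (simp add: power2_eq_square algebra_simps del: binomial_Suc_Suc)
  finally show ?thesis
    unfolding pascal_entry_def of_nat_mult[symmetric] of_nat_power[symmetric] of_nat_eq_iff .
qed simp

lemma pascal_entry_succ_mult:
  "int (i + 1) * pascal_entry (i + 1) k = int (i + k + 1) * pascal_entry i k"
proof -
  have "(i + 1) * ((i + 1 + k) choose (i + 1)) = (i + k + 1) * ((i + k) choose i)"
    by (metis Suc_eq_plus1 Suc_times_binomial_eq add.commute add.left_commute mult.commute)
  then show ?thesis
    unfolding pascal_entry_def of_nat_mult[symmetric] of_nat_eq_iff .
qed

definition J_pascal_entry :: "int \<Rightarrow> nat \<Rightarrow> nat \<Rightarrow> int" where
  "J_pascal_entry n i k = J_off n i * pascal_entry (i - 1) k + J_diag n i * pascal_entry i k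
                          + J_off n (i + 1) * pascal_entry (i + 1) k"

lemma J_pascal_entry_scaled:
  "int (i + k) * J_pascal_entry n i k
     = pascal_entry i k * (n ^ 2 * (int i ^ 2 + int i * int k + int k ^ 2 + int i + int k)
                           - (int i * int k + int i + int k) ^ 2 - (int i + int k))"
proof -
  let ?c = "pascal_entry i k"
  have "int (i + k) * J_pascal_entry n i k
      = (n ^ 2 - int i ^ 2) * (int (i + k) * (int i * pascal_entry (i - 1) k))
        + int (i + k) * J_diag n i * ?c
        + int (i + k) * (n ^ 2 - (int i + 1) ^ 2) * (int (i + 1) * pascal_entry (i + 1) k)"
    by (simp add: J_pascal_entry_def J_off_def algebra_simps)
  also have "\<dots> = (n ^ 2 - int i ^ 2) * (int i ^ 2 * ?c) + int (i + k) * J_diag n i * ?c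
        + int (i + k) * (n ^ 2 - (int i + 1) ^ 2) * (int (i + k + 1) * ?c)"
    unfolding pascal_entry_pred_mult pascal_entry_succ_mult ..
  also have "\<dots> = ?c * (n ^ 2 * (int i ^ 2 + int i * int k + int k ^ 2 + int i + int k)
                       - (int i * int k + int i + int k) ^ 2 - (int i + int k))"
    by (simp add: J_diag_def algebra_simps power2_eq_square)
  finally show ?thesis .
qed

lemma J_pascal_entry_sym: "J_pascal_entry n i k = J_pascal_entry n k i"
proof (cases "i + k = 0")
  case True
  then show ?thesis by simp
next
  case False
  then have "int (i + k) \<noteq> 0"
    by (simp only: of_nat_eq_0_iff not_False_eq_True)
  moreover have "int (i + k) * J_pascal_entry n i k = int (k + i) * J_pascal_entry n k i"
    unfolding J_pascal_entry_scaled by (simp add: pascal_entry_sym[of k i] ac_simps)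
  ultimately show ?thesis
    unfolding add.commute[of k i] by simp
qed

theorem theorem3p2:
  fixes N :: nat
  assumes "N \<ge> 1"
  shows "J_mat N * pascal_mat N = pascal_mat N * J_mat N"
proof (rule eq_matI)
  fix i k
  assume "i < dim_row (pascal_mat N * J_mat N)" "k < dim_col (pascal_mat N * J_mat N)"
  then have i: "i < N" and k: "k < N" by (auto simp: pascal_mat_def J_mat_def)
  define J where "J = tridiag_mat N (J_diag (int N)) (J_off (int N))"
  have J: "J_mat N = J"
    by (simp add: J_def J_mat_eq_tridiag_mat)
  have carrier: "J \<in> carrier_mat N N" "pascal_mat N \<in> carrier_mat N N"
    by (simp_all add: J_def tridiag_mat_def pascal_mat_def)
  have ends: "J_off (int N) 0 = 0" "J_off (int N) N = 0"
    by (simp_all add: J_off_def)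
  have row_sum: "(\<Sum>j<N. J $$ (m, j) * pascal_entry j l) = J_pascal_entry (int N) m l"
    if "m < N" for m l
    unfolding J_def J_pascal_entry_def by (rule tridiag_mat_row_sum[OF ends that])
  have "(J_mat N * pascal_mat N) $$ (i, k) = (\<Sum>j<N. J $$ (i, j) * pascal_entry j k)"
    unfolding J index_mult_square_mat[OF carrier i k] using k by (simp add: pascal_mat_index)
  also have "\<dots> = J_pascal_entry (int N) k i"
    using row_sum[OF i] J_pascal_entry_sym by simp
  also have "\<dots> = (\<Sum>j<N. J $$ (k, j) * pascal_entry j i)"
    using row_sum[OF k] by simp
  also have "\<dots> = (\<Sum>j<N. pascal_mat N $$ (i, j) * J_mat N $$ (j, k))"
    using i k by (intro sum.cong) (auto simp: J pascal_mat_index pascal_entry_sym[of _ i] J_def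
        tridiag_mat_sym[of k N])
  also have "\<dots> = (pascal_mat N * J_mat N) $$ (i, k)"
    unfolding J index_mult_square_mat[OF carrier(2,1) i k] ..
  finally show "(J_mat N * pascal_mat N) $$ (i, k) = (pascal_mat N * J_mat N) $$ (i, k)" .
qed (simp_all add: pascal_mat_def J_mat_def)

end
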